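(* Let $X$ be a real Hilbert space, $C\subseteq X$ a closed convex set, $T:C\to C$ a nonexpansive map, $x_0\in C$, and let $p\in C$ be a fixed point of $T$. Let $N\in\mathbb{N}\setminus\{0\}$ satisfy $N\geq 2\|x_0-p\|$. For every $k\in\mathbb{N}$ and every monotone function $f:\mathbb{N}\to\mathbb{N}$ there exist $n\in\mathbb{N}$ with $n\leq 24N\big(w_{f,N}^{(R)}(0)+1\big)^2$ and $x\in C\cap B_N$ such that $$\|T(x)-x\|\leq\frac{1}{f(n)+1}\quad\text{and}\quad \forall y\in C\cap B_N\ \left(\|T(y)-y\|\leq \frac{1}{n+1}\ \to\ \langle x_0-x,\,y-x\rangle\leq\frac{1}{k+1}\right),$$ where $R:=4N^4(k+1)^2$ and $w_{f,N}(m):=\max\{f(24N(m+1)^2),\,24N(m+1)^2\}$.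
   Context: $B_N:=\{x\in X:\ \|x-p\|\leq N\}$ denotes the closed ball of radius $N$ centered at the fixed point $p$. A function $f:\mathbb{N}\to\mathbb{N}$ is called monotone if $f(n)\leq f(n+1)$ for all $n\in\mathbb{N}$. For $g:\mathbb{N}\to\mathbb{N}$, $g^{(R)}$ denotes the $R$-fold composition of $g$ with itself ($g^{(0)}$ is the identity). A map $T$ is nonexpansive if $\|T(x)-T(y)\|\leq\|x-y\|$ for all $x,y$. *)

theory Defs
  imports "HOL-Analysis.Analysis"
begin

definition monotone_nat :: "(nat \<Rightarrow> nat) \<Rightarrow> bool" where
  "monotone_nat f \<longleftrightarrow> (\<forall>n. f n \<le> f (Suc n))"

definition nonexpansive_on :: "'a::real_normed_vector set \<Rightarrow> ('a \<Rightarrow> 'a) \<Rightarrow> bool" where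
  "nonexpansive_on C T \<longleftrightarrow> (\<forall>x\<in>C. \<forall>y\<in>C. norm (T x - T y) \<le> norm (x - y))"

definition w_fun :: "(nat \<Rightarrow> nat) \<Rightarrow> nat \<Rightarrow> nat \<Rightarrow> nat" where
  "w_fun f N m = max (f (24 * N * (m + 1)^2)) (24 * N * (m + 1)^2)"

end

theory Submission
  imports Defs
begin

text \<open>Write F(m) for the points of C within distance N of p whose displacement under T is at
  most 1/(m+1), and E(m) for the squared distance from x0 to F(m). Since p lies in every F(m),
  E(m) stays in [0, N^2/4], so along the orbit m_i = w^i(0) one of the first R increments
  E(m_(i+1)) - E(m_i) is at most N^2/(4R). Pick x in F(m_(i+1)) almost realising E(m_(i+1)). If the
  inner product of x0 - x and y - x were large for some almost fixed y, a short step from x towards y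
  would bring x closer to x0 by more than this increment allows; but by nonexpansiveness the new point
  still lies in F(m_i), which contradicts the definition of E(m_i).\<close>

definition almost_fixed_in_ball ::
  "'a::real_normed_vector set \<Rightarrow> ('a \<Rightarrow> 'a) \<Rightarrow> 'a \<Rightarrow> real \<Rightarrow> real \<Rightarrow> 'a set" where
  "almost_fixed_in_ball C T p r \<epsilon> = {y \<in> C. norm (y - p) \<le> r \<and> norm (T y - y) \<le> \<epsilon>}"

lemma almost_fixed_in_ball_antimono:
  assumes "m \<le> m'"
  shows "almost_fixed_in_ball C T p r (1 / (real m' + 1))
      \<subseteq> almost_fixed_in_ball C T p r (1 / (real m + 1))"
proof -
  have "1 / (real m' + 1) \<le> 1 / (real m + 1)"
    using assms by (simp add: frac_le)
  then show ?thesis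
    by (auto simp: almost_fixed_in_ball_def intro: order_trans)
qed

lemma norm_diff_convex_comb_sq:
  fixes x y z :: "'a::real_inner"
  shows "(norm (z - (x + t *\<^sub>R (y - x))))\<^sup>2
    = (1 - t) * (norm (z - x))\<^sup>2 + t * (norm (z - y))\<^sup>2 - t * (1 - t) * (norm (x - y))\<^sup>2"
  unfolding power2_norm_eq_inner
  by (simp add: inner_diff_left inner_diff_right inner_add_left inner_add_right
      inner_commute algebra_simps)

lemma norm_diff_scaleR_sq:
  fixes a b :: "'a::real_inner"
  shows "(norm (a - t *\<^sub>R b))\<^sup>2 = (norm a)\<^sup>2 - 2 * t * inner a b + t\<^sup>2 * (norm b)\<^sup>2"
  unfolding power2_norm_eq_inner
  by (simp add: inner_diff_left inner_diff_right inner_commute power2_eq_square algebra_simps)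

text \<open>In the parallelogram-type identity above, with \<open>z = T u\<close>, both distances \<open>\<parallel>T u - x\<parallel>\<close>
  and \<open>\<parallel>T u - y\<parallel>\<close> are controlled by nonexpansiveness, and \<open>4 t (1 - t) \<le> 1\<close>.\<close>
lemma nonexpansive_displacement_on_segment:
  fixes C :: "'a::real_inner set"
  assumes T: "nonexpansive_on C T" and C: "convex C" and "x \<in> C" "y \<in> C"
    and "norm (T x - x) \<le> \<epsilon>" "norm (T y - y) \<le> \<epsilon>" and t: "0 \<le> t" "t \<le> 1"
  shows "(norm (T (x + t *\<^sub>R (y - x)) - (x + t *\<^sub>R (y - x))))\<^sup>2 \<le> norm (x - y) * \<epsilon> + \<epsilon>\<^sup>2"
proof -
  define u where "u = x + t *\<^sub>R (y - x)"
  define d where "d = norm (x - y)"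
  have "u = (1 - t) *\<^sub>R x + t *\<^sub>R y"
    unfolding u_def by (simp add: algebra_simps)
  then have "u \<in> C"
    using C \<open>x \<in> C\<close> \<open>y \<in> C\<close> t by (simp add: convexD)
  have "\<epsilon> \<ge> 0" "d \<ge> 0"
    using \<open>norm (T x - x) \<le> \<epsilon>\<close> norm_ge_zero order_trans unfolding d_def by blast+
  have "u - x = t *\<^sub>R (y - x)" "u - y = (1 - t) *\<^sub>R (x - y)"
    unfolding u_def by (simp_all add: algebra_simps)
  then have ux: "norm (u - x) = t * d" and uy: "norm (u - y) = (1 - t) * d"
    using t by (simp_all add: d_def norm_minus_commute)
  have Tux: "norm (T u - x) \<le> t * d + \<epsilon>"
    using norm_triangle_ineq[of "T u - T x" "T x - x"] T \<open>u \<in> C\<close> \<open>x \<in> C\<close> ux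
      \<open>norm (T x - x) \<le> \<epsilon>\<close> unfolding nonexpansive_on_def by fastforce
  have Tuy: "norm (T u - y) \<le> (1 - t) * d + \<epsilon>"
    using norm_triangle_ineq[of "T u - T y" "T y - y"] T \<open>u \<in> C\<close> \<open>y \<in> C\<close> uy
      \<open>norm (T y - y) \<le> \<epsilon>\<close> unfolding nonexpansive_on_def by fastforce
  have "(norm (T u - u))\<^sup>2 = (1 - t) * (norm (T u - x))\<^sup>2 + t * (norm (T u - y))\<^sup>2 - t * (1 - t) * d\<^sup>2"
    unfolding u_def d_def by (rule norm_diff_convex_comb_sq)
  also have "\<dots> \<le> (1 - t) * (t * d + \<epsilon>)\<^sup>2 + t * ((1 - t) * d + \<epsilon>)\<^sup>2 - t * (1 - t) * d\<^sup>2"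
    using t Tux Tuy \<open>d \<ge> 0\<close> \<open>\<epsilon> \<ge> 0\<close> by (intro diff_mono add_mono mult_left_mono power_mono) auto
  also have "\<dots> = (4 * t * (1 - t)) * (d * \<epsilon>) + \<epsilon>\<^sup>2"
    by (simp add: power2_eq_square algebra_simps)
  also have "\<dots> \<le> 1 * (d * \<epsilon>) + \<epsilon>\<^sup>2"
    using zero_le_power2[of "2 * t - 1"] \<open>d \<ge> 0\<close> \<open>\<epsilon> \<ge> 0\<close>
    by (intro add_right_mono mult_right_mono) (auto simp: power2_eq_square algebra_simps)
  finally show ?thesis
    unfolding u_def d_def by simp
qed

lemma displacement_bound_arith:
  fixes N m :: nat and \<epsilon> :: real
  assumes "N > 0" "0 \<le> \<epsilon>" "\<epsilon> \<le> 1 / (real (24 * N * (m + 1)\<^sup>2) + 1)"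
  shows "2 * real N * \<epsilon> + \<epsilon>\<^sup>2 \<le> (1 / (real m + 1))\<^sup>2"
proof -
  define M where "M = (real m + 1)\<^sup>2"
  have "M \<ge> 1" "real N \<ge> 1"
    using assms(1) by (simp_all add: M_def)
  have "\<epsilon> \<le> 1 / (24 * real N * M + 1)"
    using assms(3) by (simp add: M_def add.commute)
  moreover have "0 \<le> 24 * real N * M"
    using \<open>M \<ge> 1\<close> by simp
  ultimately have bound: "\<epsilon> * (24 * real N * M + 1) \<le> 1"
    by (simp add: pos_le_divide_eq)
  then have NMe: "real N * M * \<epsilon> \<le> 1 / 24"
    using assms(2) by (simp add: algebra_simps)
  have "\<epsilon> * (24 * real N * M) + \<epsilon> \<le> 1"
    using bound by (simp only: distrib_left mult_1_right)
  with mult_nonneg_nonneg[OF assms(2) \<open>0 \<le> 24 * real N * M\<close>] have "\<epsilon> \<le> 1"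
    by linarith
  have "M * \<epsilon>\<^sup>2 \<le> real N * M * \<epsilon>"
    using \<open>\<epsilon> \<le> 1\<close> \<open>real N \<ge> 1\<close> \<open>M \<ge> 1\<close> assms(2)
    by (simp add: power2_eq_square mult_mono mult.assoc mult.left_commute)
  with NMe have "M * (2 * real N * \<epsilon> + \<epsilon>\<^sup>2) \<le> 1"
    by (simp add: algebra_simps)
  then show ?thesis
    using \<open>M \<ge> 1\<close> by (simp add: M_def power_divide field_simps)
qed

lemma segment_in_almost_fixed_in_ball:
  fixes C :: "'a::real_inner set"
  assumes C: "convex C" and T: "nonexpansive_on C T" and "N > 0"
    and x: "x \<in> almost_fixed_in_ball C T p N \<epsilon>" and y: "y \<in> almost_fixed_in_ball C T p N \<epsilon>"
    and \<epsilon>: "0 \<le> \<epsilon>" "\<epsilon> \<le> 1 / (real (24 * N * (m + 1)\<^sup>2) + 1)"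
    and t: "0 \<le> t" "t \<le> 1"
  shows "x + t *\<^sub>R (y - x) \<in> almost_fixed_in_ball C T p N (1 / (real m + 1))"
proof -
  define u where "u = x + t *\<^sub>R (y - x)"
  have xy: "x \<in> C \<inter> cball p N" "y \<in> C \<inter> cball p N"
    using x y by (simp_all add: almost_fixed_in_ball_def dist_norm norm_minus_commute)
  have "u = (1 - t) *\<^sub>R x + t *\<^sub>R y"
    unfolding u_def by (simp add: algebra_simps)
  also have "\<dots> \<in> C \<inter> cball p N"
    using xy t by (intro convexD[OF convex_Int[OF C convex_cball]]) auto
  finally have "u \<in> C \<inter> cball p N" .
  have "norm (x - y) \<le> 2 * real N"
    using xy norm_triangle_ineq4[of "x - p" "y - p"]
    by (simp add: dist_norm norm_minus_commute)
  then have "(norm (T u - u))\<^sup>2 \<le> 2 * real N * \<epsilon> + \<epsilon>\<^sup>2"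
    using nonexpansive_displacement_on_segment[OF T C, of x y \<epsilon> t] x y \<epsilon> t
      mult_right_mono[of "norm (x - y)" "2 * real N" \<epsilon>]
    by (simp add: u_def almost_fixed_in_ball_def)
  also have "\<dots> \<le> (1 / (real m + 1))\<^sup>2"
    using displacement_bound_arith \<open>N > 0\<close> \<epsilon> by blast
  finally have "norm (T u - u) \<le> 1 / (real m + 1)"
    by (rule power2_le_imp_le) simp
  with \<open>u \<in> C \<inter> cball p N\<close> show ?thesis
    by (simp add: u_def almost_fixed_in_ball_def dist_norm norm_minus_commute)
qed

lemma norm_diff_sq_decrease_along_segment:
  fixes x y z :: "'a::real_inner"
  assumes "\<eta> < inner (z - x) (y - x)" "0 < \<eta>" "norm (y - x) \<le> D"
  shows "(norm (z - (x + (\<eta> / D\<^sup>2) *\<^sub>R (y - x))))\<^sup>2 < (norm (z - x))\<^sup>2 - \<eta>\<^sup>2 / D\<^sup>2"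
proof -
  define t where "t = \<eta> / D\<^sup>2"
  have "y \<noteq> x"
    using assms(1,2) by auto
  then have "D > 0"
    using assms(3) by (meson zero_less_norm_iff order_less_le_trans right_minus_eq)
  then have "t > 0"
    using assms(2) by (simp add: t_def)
  have "(norm (z - (x + t *\<^sub>R (y - x))))\<^sup>2
      = (norm (z - x))\<^sup>2 - 2 * t * inner (z - x) (y - x) + t\<^sup>2 * (norm (y - x))\<^sup>2"
    using norm_diff_scaleR_sq[of "z - x" t "y - x"] by (simp add: algebra_simps)
  also have "\<dots> < (norm (z - x))\<^sup>2 - 2 * t * \<eta> + t\<^sup>2 * D\<^sup>2"
    using assms \<open>t > 0\<close> by (intro add_less_le_mono diff_strict_left_mono mult_left_mono power_mono)
      auto
  also have "\<dots> = (norm (z - x))\<^sup>2 - \<eta>\<^sup>2 / D\<^sup>2"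
    using \<open>D > 0\<close> by (simp add: t_def power2_eq_square field_simps)
  finally show ?thesis
    unfolding t_def .
qed

lemma variational_inequality_at_approximate_minimizer:
  fixes C :: "'a::real_inner set"
  assumes C: "convex C" and T: "nonexpansive_on C T" and N: "N > 0" and \<eta>: "0 < \<eta>" "\<eta> \<le> 1"
    and \<epsilon>: "0 \<le> \<epsilon>" "\<epsilon> \<le> 1 / (real (24 * N * (m + 1)\<^sup>2) + 1)"
    and x: "x \<in> almost_fixed_in_ball C T p N \<epsilon>" and y: "y \<in> almost_fixed_in_ball C T p N \<epsilon>"
    and min: "\<forall>u \<in> almost_fixed_in_ball C T p N (1 / (real m + 1)).
                (norm (z - x))\<^sup>2 \<le> (norm (z - u))\<^sup>2 + c"
    and c: "c \<le> \<eta>\<^sup>2 / (2 * real N)\<^sup>2"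
  shows "inner (z - x) (y - x) \<le> \<eta>"
proof (rule ccontr)
  assume "\<not> inner (z - x) (y - x) \<le> \<eta>"
  then have "\<eta> < inner (z - x) (y - x)"
    by simp
  define t where "t = \<eta> / (2 * real N)\<^sup>2"
  have "norm (y - x) \<le> 2 * real N"
    using x y norm_triangle_ineq4[of "y - p" "x - p"] by (simp add: almost_fixed_in_ball_def)
  have "1 \<le> (2 * real N)\<^sup>2"
    using N by (intro one_le_power) simp
  with \<eta> N have "t \<le> 1"
    by (simp add: t_def divide_le_eq_1)
  then have "x + t *\<^sub>R (y - x) \<in> almost_fixed_in_ball C T p N (1 / (real m + 1))"
    using segment_in_almost_fixed_in_ball[OF C T N x y \<epsilon>] \<eta> by (simp add: t_def)
  then have "(norm (z - x))\<^sup>2 \<le> (norm (z - (x + t *\<^sub>R (y - x))))\<^sup>2 + c"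
    using min by blast
  moreover have "(norm (z - (x + t *\<^sub>R (y - x))))\<^sup>2 < (norm (z - x))\<^sup>2 - \<eta>\<^sup>2 / (2 * real N)\<^sup>2"
    unfolding t_def using \<open>\<eta> < inner (z - x) (y - x)\<close> \<eta> \<open>norm (y - x) \<le> 2 * real N\<close>
    by (intro norm_diff_sq_decrease_along_segment) auto
  ultimately show False
    using c by linarith
qed

lemma exists_small_increment:
  fixes e :: "nat \<Rightarrow> real"
  assumes "R > 0" "0 \<le> e 0" "e R \<le> B"
  shows "\<exists>i<R. e (Suc i) - e i \<le> B / real R"
proof (rule ccontr)
  assume "\<not> ?thesis"
  then have "(\<Sum>i<R. B / real R) < (\<Sum>i<R. e (Suc i) - e i)"
    using assms(1) by (intro sum_strict_mono) auto
  with assms show False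
    by (simp add: sum_lessThan_telescope)
qed

lemma exists_near_infdist_sq:
  fixes S :: "'a::metric_space set"
  assumes "S \<noteq> {}" "\<delta> > 0"
  shows "\<exists>x\<in>S. (dist z x)\<^sup>2 < (infdist z S)\<^sup>2 + \<delta>"
proof -
  define r where "r = sqrt ((infdist z S)\<^sup>2 + \<delta>)"
  have "infdist z S < r"
    using assms(2) infdist_nonneg[of z S] unfolding r_def
    by (simp add: real_less_rsqrt)
  then obtain x where "x \<in> S" "dist z x < r"
    using cInf_lessD[of "dist z ` S" r] assms(1) by (auto simp: infdist_notempty)
  then have "(dist z x)\<^sup>2 < r\<^sup>2"
    by (simp add: power_strict_mono)
  with \<open>x \<in> S\<close> show ?thesis
    using assms(2) infdist_nonneg[of z S] by (auto simp: r_def)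
qed

lemma exists_level_with_approximate_minimizer:
  fixes S :: "nat \<Rightarrow> 'a::metric_space set"
  assumes "R > 0" and p: "\<And>j. p \<in> S j" and "dist z p \<le> r" "r > 0"
  shows "\<exists>i<R. \<exists>x\<in>S (Suc i). \<forall>u\<in>S i. (dist z x)\<^sup>2 \<le> (dist z u)\<^sup>2 + 2 * r\<^sup>2 / real R"
proof -
  define E where "E j = (infdist z (S j))\<^sup>2" for j
  have E_le: "E j \<le> (dist z u)\<^sup>2" if "u \<in> S j" for j u
    unfolding E_def using infdist_le[OF that] by (intro power_mono) (simp_all add: infdist_nonneg)
  have "(dist z p)\<^sup>2 \<le> r\<^sup>2"
    using assms(3) by (intro power_mono) simp_all
  then have "E R \<le> r\<^sup>2"
    using E_le[OF p[of R]] by linarith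
  moreover have "0 \<le> E 0"
    by (simp add: E_def)
  ultimately obtain i where "i < R" and gap: "E (Suc i) - E i \<le> r\<^sup>2 / real R"
    using exists_small_increment[OF \<open>R > 0\<close>] by blast
  moreover obtain x where "x \<in> S (Suc i)" and x: "(dist z x)\<^sup>2 < E (Suc i) + r\<^sup>2 / real R"
    using exists_near_infdist_sq[of "S (Suc i)" "r\<^sup>2 / real R" z] p assms(1,4)
    by (auto simp: E_def)
  moreover have "(dist z x)\<^sup>2 \<le> (dist z u)\<^sup>2 + 2 * r\<^sup>2 / real R" if "u \<in> S i" for u
    using E_le[OF that] gap x by simp
  ultimately show ?thesis
    by blast
qed

lemma le_w_fun:
  assumes "N > 0"
  shows "m \<le> w_fun f N m"
proof -
  have "m \<le> (m + 1)\<^sup>2"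
    by (simp add: power2_eq_square)
  also have "\<dots> \<le> 24 * N * (m + 1)\<^sup>2"
    using assms by simp
  also have "\<dots> \<le> w_fun f N m"
    by (simp add: w_fun_def)
  finally show ?thesis .
qed

lemma w_fun_iterate_mono:
  "N > 0 \<Longrightarrow> i \<le> j \<Longrightarrow> (w_fun f N ^^ i) 0 \<le> (w_fun f N ^^ j) 0"
  by (rule lift_Suc_mono_le[of "\<lambda>i. (w_fun f N ^^ i) 0"]) (simp_all add: le_w_fun)

lemma metastability_tolerance_le:
  fixes N k :: nat
  assumes "N > 0"
  shows "2 * (real N / 2)\<^sup>2 / real (4 * N ^ 4 * (k + 1)\<^sup>2) \<le> (1 / (real k + 1))\<^sup>2 / (2 * real N)\<^sup>2"
proof -
  have "2 * (a / 2)\<^sup>2 / (4 * a ^ 4 * b\<^sup>2) \<le> (1 / b)\<^sup>2 / (2 * a)\<^sup>2" if "a > 0" "b > 0" for a b :: real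
    using that by (simp add: field_simps power2_eq_square power4_eq_xxxx)
  from this[of "real N" "real k + 1"] assms show ?thesis
    by (simp add: add.commute)
qed

theorem mainTheorem2:
  fixes C :: "'a::{real_inner, complete_space} set"
    and T :: "'a \<Rightarrow> 'a" and x0 p :: 'a and N k :: nat and f :: "nat \<Rightarrow> nat"
  assumes "closed C" and "convex C"
    and "T ` C \<subseteq> C" and "nonexpansive_on C T"
    and "x0 \<in> C" and "p \<in> C" and "T p = p"
    and "N > 0" and "real N \<ge> 2 * norm (x0 - p)"
    and "monotone_nat f"
  shows "\<exists>n x. n \<le> 24 * N * (((w_fun f N) ^^ (4 * N^4 * (k + 1)^2)) 0 + 1)^2
           \<and> x \<in> C \<and> norm (x - p) \<le> real N
           \<and> norm (T x - x) \<le> 1 / (real (f n) + 1)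
           \<and> (\<forall>y\<in>C. norm (y - p) \<le> real N \<longrightarrow> norm (T y - y) \<le> 1 / (real n + 1)
                 \<longrightarrow> inner (x0 - x) (y - x) \<le> 1 / (real k + 1))"
proof -
  define F where "F m = almost_fixed_in_ball C T p N (1 / (real m + 1))" for m
  define ms where "ms j = (w_fun f N ^^ j) 0" for j
  define R where "R = 4 * N ^ 4 * (k + 1)\<^sup>2"
  have pF: "p \<in> F (ms j)" for j
    using assms(6,7) by (simp add: F_def almost_fixed_in_ball_def)
  have "R > 0" "dist x0 p \<le> real N / 2" "real N / 2 > 0"
    using assms(8,9) by (simp_all add: R_def dist_norm)
  then obtain i x where "i < R" and x: "x \<in> F (ms (Suc i))"
    and approx_min: "\<forall>u\<in>F (ms i). (norm (x0 - x))\<^sup>2 \<le> (norm (x0 - u))\<^sup>2 + 2 * (real N / 2)\<^sup>2 / real R"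
    using exists_level_with_approximate_minimizer[where S = "\<lambda>j. F (ms j)",
        OF \<open>R > 0\<close> pF \<open>dist x0 p \<le> real N / 2\<close> \<open>real N / 2 > 0\<close>] by (auto simp: dist_norm)
  define n where "n = 24 * N * (ms i + 1)\<^sup>2"
  have "n \<le> ms (Suc i)" "f n \<le> ms (Suc i)"
    by (simp_all add: ms_def n_def w_fun_def)
  then have "x \<in> F n" "x \<in> F (f n)"
    using x almost_fixed_in_ball_antimono unfolding F_def by (meson rev_subsetD)+
  have "inner (x0 - x) (y - x) \<le> 1 / (real k + 1)"
    if "y \<in> C" "norm (y - p) \<le> real N" "norm (T y - y) \<le> 1 / (real n + 1)" for y
    using variational_inequality_at_approximate_minimizer[OF assms(2,4,8) _ _ _ _
        \<open>x \<in> F n\<close>[unfolded F_def] _ approx_min[unfolded F_def]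
        metastability_tolerance_le[OF assms(8), of k, folded R_def]] that
    by (simp add: n_def almost_fixed_in_ball_def)
  moreover have "ms i \<le> ms R"
    using w_fun_iterate_mono[OF assms(8), of i R] \<open>i < R\<close> by (simp add: ms_def)
  then have "n \<le> 24 * N * (ms R + 1)\<^sup>2"
    by (simp add: n_def power_mono)
  ultimately show ?thesis
    using \<open>x \<in> F n\<close> \<open>x \<in> F (f n)\<close> unfolding F_def almost_fixed_in_ball_def ms_def R_def
    by (intro exI[of _ n] exI[of _ x]) auto
qed

end
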